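(* The following rules are sound, i.e. for every instance, if all premisses are valid then the conclusion is valid: $(\top R)$: $\Gamma\Rightarrow\Delta,\top$ (no premisses); $(\mathrm{lit}L)$: from $N_c,\Gamma\Rightarrow P_c$ infer $N_c,\Gamma\Rightarrow\Delta$; $(\mathrm{lit}R)$: from $P_c,\Gamma\Rightarrow$ (empty succedent) infer $\Gamma\Rightarrow\Delta,N_c$; for a Venn diagram $d=(L,\mathcal Z(L),S)$ with $|S|>1$ and $d_i=(L,\mathcal Z(L),S_i)$ ($i=1,2$) with $S_1\cup S_2=S$: $(\mathrm{sep}L)$: from $d_1,\Gamma\Rightarrow\Delta$ and $d_2,\Gamma\Rightarrow\Delta$ infer $d,\Gamma\Rightarrow\Delta$, and $(\mathrm{sep}R)$: from $\Gamma\Rightarrow\Delta,d_1,d_2$ infer $\Gamma\Rightarrow\Delta,d$; for a Venn diagram $d$ whose only shaded zone is $z=(\{n_1,\dots,n_k\},\{o_1,\dots,o_l\})$: $(\mathrm{dec}L)$: from $P_{n_1},\dots,P_{n_k},N_{o_1},\dots,N_{o_l},\Gamma\Rightarrow\Delta$ infer $d,\Gamma\Rightarrow\Delta$, and $(\mathrm{dec}R)$: from $\Gamma\Rightarrow\Delta,P_{n_i}$ for all $1\le i\le k$ and $\Gamma\Rightarrow\Delta,N_{o_j}$ for all $1\le j\le l$ infer $\Gamma\Rightarrow\Delta,d$. Here $\Gamma,\Delta$ are arbitrary finite multisets of compound diagrams and $c\in\mathcal V$.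
   Context: Fix a countably infinite set $\mathcal V$ of propositional variables. A Heyting algebra $(H,\vee,\wedge,\to,0,1)$ is a bounded distributive lattice with a binary operation $\to$ such that $c\wedge a\le b\iff c\le a\to b$; $-a:=a\to0$; empty meets are $1$, empty joins $0$. A valuation is a map $v:\mathcal V\to H$. For a finite $L\subset\mathcal V$, a zone over $L$ is a pair $z=(\mathrm{in}(z),\mathrm{out}(z))$ of disjoint subsets of $L$ with union $L$; $\mathcal Z(L)$ is the set of all zones over $L$; $v(z)=\bigwedge_{c\in\mathrm{in}(z)}v(c)\wedge\bigwedge_{c\in\mathrm{out}(z)}-v(c)$ and $m_v(z)=\big(\bigwedge_{c\in\mathrm{in}(z)}v(c)\big)\to\big(\bigvee_{c\in\mathrm{out}(z)}v(c)\big)$. Unitary diagrams are of three kinds: Venn diagrams $d=(L,\mathcal Z(L),S)$, $S\subseteq\mathcal Z(L)$ shaded, $[\![d]\!]_v=\bigvee_{z\in S}v(z)$; pure Euler diagrams $d=(L,Z)$, $Z\subseteq\mathcal Z(L)$, missing zones $M(d)=\mathcal Z(L)\setminus Z$, $[\![d]\!]_v=\bigwedge_{z\in M(d)}m_v(z)$; Euler–Venn diagrams $d=(L,Z,S)$, $S\subseteq Z\subseteq\mathcal Z(L)$, $[\![d]\!]_v=[\![(L,Z)]\!]_v\to[\![(L,\mathcal Z(L),S)]\!]_v$. Special Venn diagrams: $\top=(\emptyset,\{(\emptyset,\emptyset)\},\{(\emptyset,\emptyset)\})$, $P_c=(\{c\},\mathcal Z(\{c\}),\{(\{c\},\emptyset)\})$,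 $N_c=(\{c\},\mathcal Z(\{c\}),\{(\emptyset,\{c\})\})$. Compound diagrams are built from unitary ones with $\wedge,\vee,\to$, interpreted by meet, join and Heyting implication. A sequent $\Gamma\Rightarrow\Delta$ (finite multisets of compound diagrams) is valid iff for every Heyting algebra and valuation $v$, $\bigwedge_{D\in\Gamma}[\![D]\!]_v\le\bigvee_{E\in\Delta}[\![E]\!]_v$. *)

theory Defs
  imports Main "HOL-Library.Multiset"
begin

unbundle lattice_syntax

class heyting_algebra = bounded_lattice + distrib_lattice +
  fixes himp :: "'a \<Rightarrow> 'a \<Rightarrow> 'a"  (infixr "\<leadsto>" 60)
  assumes himp_adj: "c \<sqinter> a \<le> b \<longleftrightarrow> c \<le> a \<leadsto> b"

definition hneg :: "'a::heyting_algebra \<Rightarrow> 'a" where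
  "hneg a = a \<leadsto> bot"

definition hMeet :: "('b \<Rightarrow> 'a::heyting_algebra) \<Rightarrow> 'b set \<Rightarrow> 'a" where
  "hMeet f A = comm_monoid_set.F inf top f A"

definition hJoin :: "('b \<Rightarrow> 'a::heyting_algebra) \<Rightarrow> 'b set \<Rightarrow> 'a" where
  "hJoin f A = comm_monoid_set.F sup bot f A"

definition msMeet :: "('b \<Rightarrow> 'a::heyting_algebra) \<Rightarrow> 'b multiset \<Rightarrow> 'a" where
  "msMeet f M = fold_mset inf top (image_mset f M)"

definition msJoin :: "('b \<Rightarrow> 'a::heyting_algebra) \<Rightarrow> 'b multiset \<Rightarrow> 'a" where
  "msJoin f M = fold_mset sup bot (image_mset f M)"

text \<open>Propositional variables: the countably infinite set nat.
  A zone is a pair (in, out).\<close>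
type_synonym var = nat
type_synonym zone = "var set \<times> var set"

definition zones :: "var set \<Rightarrow> zone set" where
  "zones L = {z. fst z \<inter> snd z = {} \<and> fst z \<union> snd z = L}"

text \<open>Unitary diagrams. \<open>Venn L S\<close> stands for the triple (L, zones L, S).\<close>
datatype udiag =
    Venn "var set" "zone set"
  | Euler "var set" "zone set"
  | EulerVenn "var set" "zone set" "zone set"

datatype cdiag =
    Unit udiag
  | CAnd cdiag cdiag
  | COr cdiag cdiag
  | CImp cdiag cdiag

fun wf_u :: "udiag \<Rightarrow> bool" where
  "wf_u (Venn L S) = (finite L \<and> S \<subseteq> zones L)"
| "wf_u (Euler L Z) = (finite L \<and> Z \<subseteq> zones L)"
| "wf_u (EulerVenn L Z S) = (finite L \<and> S \<subseteq> Z \<and> Z \<subseteq> zones L)"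

fun wf_c :: "cdiag \<Rightarrow> bool" where
  "wf_c (Unit d) = wf_u d"
| "wf_c (CAnd a b) = (wf_c a \<and> wf_c b)"
| "wf_c (COr a b) = (wf_c a \<and> wf_c b)"
| "wf_c (CImp a b) = (wf_c a \<and> wf_c b)"

definition zval :: "(var \<Rightarrow> 'a::heyting_algebra) \<Rightarrow> zone \<Rightarrow> 'a" where
  "zval v z = hMeet v (fst z) \<sqinter> hMeet (\<lambda>c. hneg (v c)) (snd z)"

definition mval :: "(var \<Rightarrow> 'a::heyting_algebra) \<Rightarrow> zone \<Rightarrow> 'a" where
  "mval v z = hMeet v (fst z) \<leadsto> hJoin v (snd z)"

fun usem :: "(var \<Rightarrow> 'a::heyting_algebra) \<Rightarrow> udiag \<Rightarrow> 'a" where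
  "usem v (Venn L S) = hJoin (zval v) S"
| "usem v (Euler L Z) = hMeet (mval v) (zones L - Z)"
| "usem v (EulerVenn L Z S) = hMeet (mval v) (zones L - Z) \<leadsto> hJoin (zval v) S"

fun csem :: "(var \<Rightarrow> 'a::heyting_algebra) \<Rightarrow> cdiag \<Rightarrow> 'a" where
  "csem v (Unit d) = usem v d"
| "csem v (CAnd a b) = csem v a \<sqinter> csem v b"
| "csem v (COr a b) = csem v a \<squnion> csem v b"
| "csem v (CImp a b) = csem v a \<leadsto> csem v b"

definition valid :: "'a::heyting_algebra itself \<Rightarrow> cdiag multiset \<Rightarrow> cdiag multiset \<Rightarrow> bool" where
  "valid _ \<Gamma> \<Delta> = (\<forall>v::var \<Rightarrow> 'a. msMeet (csem v) \<Gamma> \<le> msJoin (csem v) \<Delta>)"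

definition wf_ms :: "cdiag multiset \<Rightarrow> bool" where
  "wf_ms M = (\<forall>D\<in>#M. wf_c D)"

definition TopD :: cdiag where
  "TopD = Unit (Venn {} {({}, {})})"

definition PD :: "var \<Rightarrow> cdiag" where
  "PD c = Unit (Venn {c} {({c}, {})})"

definition ND :: "var \<Rightarrow> cdiag" where
  "ND c = Unit (Venn {c} {({}, {c})})"

end

theory Submission
  imports Defs
begin

text \<open>Read semantically, each rule is an identity of Heyting algebras. A Venn diagram
  denotes the join of its shaded zones, so splitting the shaded set splits the join; a single
  zone denotes the meet of its literals, so decomposing it is meet introduction and elimination;
  the literal rules are \<open>a \<sqinter> -a = 0\<close> and the residuation law for \<open>-a = a \<leadsto> 0\<close>.\<close>

interpretation hMeet: comm_monoid_set "inf :: 'a::heyting_algebra \<Rightarrow> 'a \<Rightarrow> 'a" top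
  rewrites "comm_monoid_set.F inf top = (hMeet :: ('b \<Rightarrow> 'a) \<Rightarrow> 'b set \<Rightarrow> 'a)"
proof -
  show "comm_monoid_set (inf :: 'a \<Rightarrow> 'a \<Rightarrow> 'a) top"
    by (rule comm_monoid_set.intro) (rule inf_top.comm_monoid_axioms)
  show "comm_monoid_set.F inf top = (hMeet :: ('b \<Rightarrow> 'a) \<Rightarrow> 'b set \<Rightarrow> 'a)"
    by (intro ext) (simp add: hMeet_def)
qed

interpretation hJoin: comm_monoid_set "sup :: 'a::heyting_algebra \<Rightarrow> 'a \<Rightarrow> 'a" bot
  rewrites "comm_monoid_set.F sup bot = (hJoin :: ('b \<Rightarrow> 'a) \<Rightarrow> 'b set \<Rightarrow> 'a)"
proof -
  show "comm_monoid_set (sup :: 'a \<Rightarrow> 'a \<Rightarrow> 'a) bot"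
    by (rule comm_monoid_set.intro) (rule sup_bot.comm_monoid_axioms)
  show "comm_monoid_set.F sup bot = (hJoin :: ('b \<Rightarrow> 'a) \<Rightarrow> 'b set \<Rightarrow> 'a)"
    by (intro ext) (simp add: hJoin_def)
qed

lemma le_hMeetI:
  fixes f :: "'b \<Rightarrow> 'a::heyting_algebra"
  assumes "\<And>x. x \<in> A \<Longrightarrow> c \<le> f x"
  shows "c \<le> hMeet f A"
proof (cases "finite A")
  case True
  then show ?thesis using assms by (induction A rule: finite_induct) simp_all
qed simp

lemma hMeet_sup_distrib:
  fixes f :: "'b \<Rightarrow> 'a::heyting_algebra"
  shows "hMeet f A \<squnion> d = hMeet (\<lambda>x. f x \<squnion> d) A"
proof (cases "finite A")
  case True
  then show ?thesis by (induction A rule: finite_induct) (simp_all add: sup_inf_distrib2)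
qed simp

lemma hJoin_le_iff:
  fixes f :: "'b \<Rightarrow> 'a::heyting_algebra"
  assumes "finite A"
  shows "hJoin f A \<le> c \<longleftrightarrow> (\<forall>x\<in>A. f x \<le> c)"
  using assms by (induction A rule: finite_induct) simp_all

lemma hJoin_union:
  fixes f :: "'b \<Rightarrow> 'a::heyting_algebra"
  assumes "finite A" and "finite B"
  shows "hJoin f (A \<union> B) = hJoin f A \<squnion> hJoin f B"
proof -
  have "hJoin f (A \<union> B) \<le> c \<longleftrightarrow> hJoin f A \<squnion> hJoin f B \<le> c" for c
    using assms by (auto simp: hJoin_le_iff)
  then show ?thesis by (blast intro: order.antisym)
qed

lemma msMeet_add_mset [simp]:
  "msMeet f (add_mset x M) = (f x :: 'a::heyting_algebra) \<sqinter> msMeet f M"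
proof -
  interpret comp_fun_commute "inf :: 'a \<Rightarrow> _"
    by (rule comp_fun_idem_inf[THEN comp_fun_idem.axioms(1)])
  show ?thesis unfolding msMeet_def by simp
qed

lemma msJoin_add_mset [simp]:
  "msJoin f (add_mset x M) = (f x :: 'a::heyting_algebra) \<squnion> msJoin f M"
proof -
  interpret comp_fun_commute "sup :: 'a \<Rightarrow> _"
    by (rule comp_fun_idem_sup[THEN comp_fun_idem.axioms(1)])
  show ?thesis unfolding msJoin_def by simp
qed

lemma msMeet_empty [simp]: "msMeet f {#} = top"
  unfolding msMeet_def by simp

lemma msJoin_empty [simp]: "msJoin f {#} = bot"
  unfolding msJoin_def by simp

lemma msMeet_union [simp]: "msMeet f (M + N) = msMeet f M \<sqinter> msMeet f N"
  by (induction M) (simp_all add: inf_assoc)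

lemma msJoin_union [simp]: "msJoin f (M + N) = msJoin f M \<squnion> msJoin f N"
  by (induction M) (simp_all add: sup_assoc)

lemma msMeet_image_mset: "msMeet f (image_mset g M) = msMeet (f \<circ> g) M"
  by (induction M) simp_all

lemma msMeet_mset_set: "msMeet f (mset_set A) = hMeet f A"
proof (cases "finite A")
  case True
  then show ?thesis by (induction A rule: finite_induct) simp_all
qed simp

lemma le_hneg_iff: "(c::'a::heyting_algebra) \<le> hneg a \<longleftrightarrow> c \<sqinter> a = bot"
  by (simp add: hneg_def himp_adj[symmetric] bot_unique)

lemma inf_hneg_self: "(a::'a::heyting_algebra) \<sqinter> hneg a = bot"
  using le_hneg_iff[of "hneg a" a] by (simp add: inf_commute)

lemma csem_PD [simp]: "csem v (PD c) = v c"
  by (simp add: PD_def zval_def)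

lemma csem_ND [simp]: "csem v (ND c) = hneg (v c)"
  by (simp add: ND_def zval_def)

lemma csem_TopD [simp]: "csem v TopD = top"
  by (simp add: TopD_def zval_def)

lemma msMeet_zone_literals:
  "msMeet (csem v) (image_mset PD (mset_set (fst z))) \<sqinter>
   msMeet (csem v) (image_mset ND (mset_set (snd z))) = zval v z"
  by (simp add: msMeet_image_mset msMeet_mset_set comp_def zval_def)

lemma le_zval_supI:
  assumes "\<And>n. n \<in> fst z \<Longrightarrow> c \<le> v n \<squnion> d"
    and "\<And>m. m \<in> snd z \<Longrightarrow> c \<le> hneg (v m) \<squnion> d"
  shows "c \<le> zval v z \<squnion> d"
  using assms by (simp add: zval_def sup_inf_distrib2 hMeet_sup_distrib le_hMeetI)

lemma valid_TopD_right: "valid H \<Gamma> (\<Delta> + {#TopD#})"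
  by (simp add: valid_def)

lemma valid_ND_left:
  assumes "valid H ({#ND c#} + \<Gamma>) {#PD c#}"
  shows "valid H ({#ND c#} + \<Gamma>) \<Delta>"
  unfolding valid_def
proof
  fix v :: "var \<Rightarrow> 'a"
  have "hneg (v c) \<sqinter> msMeet (csem v) \<Gamma> \<le> v c \<sqinter> hneg (v c)"
    using assms by (simp add: valid_def)
  then show "msMeet (csem v) ({#ND c#} + \<Gamma>) \<le> msJoin (csem v) \<Delta>"
    by (simp add: inf_hneg_self bot_unique)
qed

lemma valid_ND_right:
  assumes "valid H ({#PD c#} + \<Gamma>) {#}"
  shows "valid H \<Gamma> (\<Delta> + {#ND c#})"
  unfolding valid_def
proof
  fix v :: "var \<Rightarrow> 'a"
  have "msMeet (csem v) \<Gamma> \<le> hneg (v c)"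
    using assms by (simp add: valid_def le_hneg_iff inf_commute bot_unique)
  then show "msMeet (csem v) \<Gamma> \<le> msJoin (csem v) (\<Delta> + {#ND c#})"
    by (simp add: le_supI1)
qed

lemma valid_Venn_split_left:
  assumes "finite S1" and "finite S2"
    and "valid H ({#Unit (Venn L S1)#} + \<Gamma>) \<Delta>"
    and "valid H ({#Unit (Venn L S2)#} + \<Gamma>) \<Delta>"
  shows "valid H ({#Unit (Venn L (S1 \<union> S2))#} + \<Gamma>) \<Delta>"
  using assms by (simp add: valid_def hJoin_union inf_sup_distrib2)

lemma valid_Venn_split_right:
  assumes "finite S1" and "finite S2"
    and "valid H \<Gamma> (\<Delta> + {#Unit (Venn L S1), Unit (Venn L S2)#})"
  shows "valid H \<Gamma> (\<Delta> + {#Unit (Venn L (S1 \<union> S2))#})"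
  using assms by (simp add: valid_def hJoin_union sup_assoc)

lemma valid_Venn_zone_left:
  assumes "valid H (image_mset PD (mset_set (fst z)) + image_mset ND (mset_set (snd z)) + \<Gamma>) \<Delta>"
  shows "valid H ({#Unit (Venn L {z})#} + \<Gamma>) \<Delta>"
  using assms by (simp add: valid_def msMeet_zone_literals)

lemma valid_Venn_zone_right:
  assumes "\<forall>n\<in>fst z. valid H \<Gamma> (\<Delta> + {#PD n#})"
    and "\<forall>m\<in>snd z. valid H \<Gamma> (\<Delta> + {#ND m#})"
  shows "valid H \<Gamma> (\<Delta> + {#Unit (Venn L {z})#})"
  using assms by (auto simp: valid_def intro!: le_zval_supI)

theorem lemma7:
  fixes H :: "'a::heyting_algebra itself"
  shows
   \<comment> \<open>(top R)\<close>
   "(\<forall>\<Gamma> \<Delta>. wf_ms \<Gamma> \<longrightarrow> wf_ms \<Delta> \<longrightarrow> valid H \<Gamma> (\<Delta> + {#TopD#}))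
  \<comment> \<open>(lit L)\<close>
  \<and> (\<forall>\<Gamma> \<Delta> c. wf_ms \<Gamma> \<longrightarrow> wf_ms \<Delta> \<longrightarrow>
        valid H ({#ND c#} + \<Gamma>) {#PD c#} \<longrightarrow> valid H ({#ND c#} + \<Gamma>) \<Delta>)
  \<comment> \<open>(lit R)\<close>
  \<and> (\<forall>\<Gamma> \<Delta> c. wf_ms \<Gamma> \<longrightarrow> wf_ms \<Delta> \<longrightarrow>
        valid H ({#PD c#} + \<Gamma>) {#} \<longrightarrow> valid H \<Gamma> (\<Delta> + {#ND c#}))
  \<comment> \<open>(sep L)\<close>
  \<and> (\<forall>\<Gamma> \<Delta> L S S1 S2. wf_ms \<Gamma> \<longrightarrow> wf_ms \<Delta> \<longrightarrow>
        finite L \<longrightarrow> S \<subseteq> zones L \<longrightarrow> card S > 1 \<longrightarrow> S1 \<union> S2 = S \<longrightarrow>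
        valid H ({#Unit (Venn L S1)#} + \<Gamma>) \<Delta> \<longrightarrow>
        valid H ({#Unit (Venn L S2)#} + \<Gamma>) \<Delta> \<longrightarrow>
        valid H ({#Unit (Venn L S)#} + \<Gamma>) \<Delta>)
  \<comment> \<open>(sep R)\<close>
  \<and> (\<forall>\<Gamma> \<Delta> L S S1 S2. wf_ms \<Gamma> \<longrightarrow> wf_ms \<Delta> \<longrightarrow>
        finite L \<longrightarrow> S \<subseteq> zones L \<longrightarrow> card S > 1 \<longrightarrow> S1 \<union> S2 = S \<longrightarrow>
        valid H \<Gamma> (\<Delta> + {#Unit (Venn L S1), Unit (Venn L S2)#}) \<longrightarrow>
        valid H \<Gamma> (\<Delta> + {#Unit (Venn L S)#}))
  \<comment> \<open>(dec L)\<close>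
  \<and> (\<forall>\<Gamma> \<Delta> L z. wf_ms \<Gamma> \<longrightarrow> wf_ms \<Delta> \<longrightarrow>
        finite L \<longrightarrow> z \<in> zones L \<longrightarrow>
        valid H (image_mset PD (mset_set (fst z)) + image_mset ND (mset_set (snd z)) + \<Gamma>) \<Delta> \<longrightarrow>
        valid H ({#Unit (Venn L {z})#} + \<Gamma>) \<Delta>)
  \<comment> \<open>(dec R)\<close>
  \<and> (\<forall>\<Gamma> \<Delta> L z. wf_ms \<Gamma> \<longrightarrow> wf_ms \<Delta> \<longrightarrow>
        finite L \<longrightarrow> z \<in> zones L \<longrightarrow>
        (\<forall>n\<in>fst z. valid H \<Gamma> (\<Delta> + {#PD n#})) \<longrightarrow>
        (\<forall>m\<in>snd z. valid H \<Gamma> (\<Delta> + {#ND m#})) \<longrightarrow>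
        valid H \<Gamma> (\<Delta> + {#Unit (Venn L {z})#}))"
proof (intro conjI allI impI)
  fix S S1 S2 :: "zone set" and L \<Gamma> \<Delta>
  assume "card S > 1" and split: "S1 \<union> S2 = S"
  then have "finite S"
    by (intro card_ge_0_finite) simp
  with split have "finite S1" and "finite S2"
    by blast+
  then show
    "valid H ({#Unit (Venn L S1)#} + \<Gamma>) \<Delta> \<Longrightarrow> valid H ({#Unit (Venn L S2)#} + \<Gamma>) \<Delta> \<Longrightarrow>
       valid H ({#Unit (Venn L S)#} + \<Gamma>) \<Delta>"
    and "valid H \<Gamma> (\<Delta> + {#Unit (Venn L S1), Unit (Venn L S2)#}) \<Longrightarrow>
       valid H \<Gamma> (\<Delta> + {#Unit (Venn L S)#})"
    using valid_Venn_split_left[of S1 S2] valid_Venn_split_right[of S1 S2]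
    by (simp_all add: split)
qed (blast intro: valid_TopD_right valid_ND_left valid_ND_right
       valid_Venn_zone_left valid_Venn_zone_right)+

end
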